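(* Let $X$ be any normed space. Then $\mathcal{A}(X)=\mathcal{R}(X)\neq\emptyset$.
   Context: For a normed space $X$ let $S_X$ be its unit sphere, equipped with the norm topology and the kernel $k(x,y)=\|x-y\|$. For a positive regular Borel measure $\mu$ its potential is $U^\mu(x)=\int k(x,y)\,d\mu(y)$. Let $\mathfrak{M}_1(S_X)$ denote the regular Borel probability measures on $X$ concentrated on $S_X$, and $\mathfrak{M}_1^{\#}(S_X)$ those with finite support in $S_X$. For $\mu$ put $A(\mu,S_X):=\overline{\mathrm{conv}}\{U^\mu(x):x\in S_X\}=[\inf_{S_X}U^\mu,\sup_{S_X}U^\mu]$. Then $\mathcal{A}(X):=\bigcap_{\mu\in\mathfrak{M}_1(S_X)}A(\mu,S_X)$ and $\mathcal{R}(X):=\bigcap_{\mu\in\mathfrak{M}_1^{\#}(S_X)}A(\mu,S_X)$ (equivalently $\mathcal{R}(X)=\bigcap_n\bigcap_{w_1,\dots,w_n\in S_X}\overline{\mathrm{conv}}\{\frac1n\sum_j\|x-w_j\|:x\in S_X\}$). *)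

theory Defs
  imports "HOL-Probability.Probability"
begin

definition potential :: "'a::real_normed_vector measure \<Rightarrow> 'a \<Rightarrow> real" where
  "potential \<mu> x = (\<integral>y. norm (x - y) \<partial>\<mu>)"

definition regular_measure :: "'a::topological_space measure \<Rightarrow> bool" where
  "regular_measure \<mu> \<longleftrightarrow>
     (\<forall>B\<in>sets borel.
        emeasure \<mu> B = (SUP K\<in>{K. compact K \<and> K \<subseteq> B}. emeasure \<mu> K) \<and>
        emeasure \<mu> B = (INF U\<in>{U. open U \<and> B \<subseteq> U}. emeasure \<mu> U))"

definition prob_measures_sphere :: "'a::real_normed_vector measure set" where
  "prob_measures_sphere =
     {\<mu>. sets \<mu> = sets borel \<and> prob_space \<mu> \<and> regular_measure \<mu> \<and>
          emeasure \<mu> (- sphere 0 1) = 0}"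

definition finsupp_prob_measures_sphere :: "'a::real_normed_vector measure set" where
  "finsupp_prob_measures_sphere =
     {\<mu>\<in>prob_measures_sphere. \<exists>F. finite F \<and> F \<subseteq> sphere 0 1 \<and> emeasure \<mu> (- F) = 0}"

definition A_set :: "'a::real_normed_vector measure \<Rightarrow> real set" where
  "A_set \<mu> = closure (convex hull (potential \<mu> ` sphere 0 1))"

definition calA :: "'a::real_normed_vector itself \<Rightarrow> real set" where
  "calA _ = (\<Inter>\<mu>\<in>(prob_measures_sphere :: 'a measure set). A_set \<mu>)"

definition calR :: "'a::real_normed_vector itself \<Rightarrow> real set" where
  "calR _ = (\<Inter>\<mu>\<in>(finsupp_prob_measures_sphere :: 'a measure set). A_set \<mu>)"

end

theory Submission
  imports Defs
begin

(* For mu in M_1(S_X) the potential satisfies 0 <= U^mu <= 2 on the sphere, so A(mu, S_X) is the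
   interval [inf U^mu, sup U^mu]. By inner regularity, mu can be pushed forward along a Borel map
   with finitely many values on S_X that moves the points of a large compact subset of S_X only
   a little; this gives a finitely supported nu whose potential is uniformly close to U^mu. Hence
   intersecting over finitely supported measures gives the same set as over all of M_1(S_X).
   For finitely supported nu1, nu2 the symmetry of the kernel gives
   int U^nu1 d nu2 = int U^nu2 d nu1, so inf U^nu1 <= sup U^nu2; by approximation
   inf U^mu <= sup U^nu for all mu, nu in M_1(S_X), and the supremum of the lower endpoints
   lies in every interval A(mu, S_X). *)

definition pot_inf :: "'a::real_normed_vector measure \<Rightarrow> real" where
  "pot_inf \<mu> = (INF x\<in>sphere 0 1. potential \<mu> x)"

definition pot_sup :: "'a::real_normed_vector measure \<Rightarrow> real" where
  "pot_sup \<mu> = (SUP x\<in>sphere 0 1. potential \<mu> x)"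

lemma closure_convex_hull_real:
  fixes V :: "real set"
  assumes "V \<noteq> {}" "bdd_above V" "bdd_below V"
  shows "closure (convex hull V) = {Inf V..Sup V}"
proof
  have "convex hull V \<subseteq> {Inf V..Sup V}"
    by (rule hull_minimal)
       (auto simp: convex_real_interval intro: cInf_lower[OF _ assms(3)] cSup_upper[OF _ assms(2)])
  then show "closure (convex hull V) \<subseteq> {Inf V..Sup V}"
    by (rule closure_minimal) simp
next
  have "closure V \<subseteq> closure (convex hull V)"
    by (intro closure_mono hull_subset)
  moreover have "Inf V \<in> closure V" "Sup V \<in> closure V"
    using assms by (auto intro: closure_contains_Inf closure_contains_Sup)
  ultimately have "closed_segment (Inf V) (Sup V) \<subseteq> closure (convex hull V)"
    using convex_closure[OF convex_convex_hull[of V]] unfolding convex_contains_segment by blast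
  moreover have "Inf V \<le> Sup V"
    using assms by (meson all_not_in_conv cInf_lower cSup_upper order.trans)
  ultimately show "{Inf V..Sup V} \<subseteq> closure (convex hull V)"
    by (simp add: closed_segment_eq_real_ivl)
qed

lemma cINF_le_cINF_add:
  fixes f g :: "'a \<Rightarrow> real"
  assumes "S \<noteq> {}" "bdd_below (f ` S)" "\<And>x. x \<in> S \<Longrightarrow> f x \<le> g x + e"
  shows "(INF x\<in>S. f x) \<le> (INF x\<in>S. g x) + e"
proof -
  have "(INF x\<in>S. f x) - e \<le> (INF x\<in>S. g x)"
  proof (rule cINF_greatest[OF assms(1)])
    fix x assume "x \<in> S"
    then show "(INF x\<in>S. f x) - e \<le> g x"
      using cINF_lower[OF assms(2)] assms(3) by fastforce
  qed
  then show ?thesis by simp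
qed

lemma cSUP_le_cSUP_add:
  fixes f g :: "'a \<Rightarrow> real"
  assumes "S \<noteq> {}" "bdd_above (g ` S)" "\<And>x. x \<in> S \<Longrightarrow> f x \<le> g x + e"
  shows "(SUP x\<in>S. f x) \<le> (SUP x\<in>S. g x) + e"
proof (rule cSUP_least[OF assms(1)])
  fix x assume "x \<in> S"
  then show "f x \<le> (SUP x\<in>S. g x) + e"
    using cSUP_upper[OF _ assms(2)] assms(3) by fastforce
qed

lemma closed_sphere_metric: "closed (sphere (a::'a::metric_space) r)"
  unfolding sphere_def by (intro closed_Collect_eq continuous_intros)

lemma norm_diff_le_2_sphere:
  fixes x y :: "'a::real_normed_vector"
  assumes "x \<in> sphere 0 1" "y \<in> sphere 0 1"
  shows "norm (x - y) \<le> 2"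
  using assms norm_triangle_ineq4[of x y] by simp

lemma borel_measurable_norm_diff: "(\<lambda>y. norm (x - y)) \<in> borel_measurable borel"
  for x :: "'a::real_normed_vector"
  by (intro borel_measurable_continuous_onI continuous_intros)

lemma potential_nonneg: "0 \<le> potential \<mu> x"
  unfolding potential_def by simp

lemma AE_in_closed:
  assumes "sets M = sets borel" "closed A" "emeasure M (- A) = 0"
  shows "AE x in M. x \<in> A"
proof (rule AE_I')
  have "- A \<in> sets M"
    using assms(1,2) by (metis borel_closed borel_comp)
  then show "- A \<in> null_sets M"
    using assms(3) by (rule null_setsI[rotated])
qed auto

lemma regular_measure_finite_support:
  fixes \<nu> :: "'a::t1_space measure"
  assumes sets_\<nu>: "sets \<nu> = sets borel" and "finite F" and "emeasure \<nu> (- F) = 0"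
  shows "regular_measure \<nu>"
  unfolding regular_measure_def
proof (intro ballI conjI)
  have AE_F: "AE y in \<nu>. y \<in> F"
    using assms by (intro AE_in_closed finite_imp_closed)
  have concentrated: "emeasure \<nu> B = emeasure \<nu> (B \<inter> F)" if "B \<in> sets borel" for B
    using AE_F that sets_\<nu> \<open>finite F\<close>
    by (intro emeasure_eq_AE) (auto intro: borel_closed finite_imp_closed)
  fix B :: "'a set" assume B: "B \<in> sets borel"
  show "emeasure \<nu> B = (SUP K\<in>{K. compact K \<and> K \<subseteq> B}. emeasure \<nu> K)"
  proof (rule antisym)
    have "B \<inter> F \<in> {K. compact K \<and> K \<subseteq> B}"
      using \<open>finite F\<close> by (auto intro: finite_imp_compact)
    then show "emeasure \<nu> B \<le> (SUP K\<in>{K. compact K \<and> K \<subseteq> B}. emeasure \<nu> K)"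
      unfolding concentrated[OF B] by (rule SUP_upper)
    show "(SUP K\<in>{K. compact K \<and> K \<subseteq> B}. emeasure \<nu> K) \<le> emeasure \<nu> B"
      by (rule SUP_least) (auto intro!: emeasure_mono simp: sets_\<nu> B)
  qed
  show "emeasure \<nu> B = (INF U\<in>{U. open U \<and> B \<subseteq> U}. emeasure \<nu> U)"
  proof (rule antisym)
    show "emeasure \<nu> B \<le> (INF U\<in>{U. open U \<and> B \<subseteq> U}. emeasure \<nu> U)"
      by (rule INF_greatest) (auto intro!: emeasure_mono simp: sets_\<nu>)
    define U where "U = - (F - B)"
    have "open U"
      unfolding U_def using \<open>finite F\<close> by (intro open_Compl finite_imp_closed) auto
    then have "(INF U\<in>{U. open U \<and> B \<subseteq> U}. emeasure \<nu> U) \<le> emeasure \<nu> U"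
      by (intro INF_lower) (auto simp: U_def)
    also have "\<dots> = emeasure \<nu> (U \<inter> F)"
      using \<open>open U\<close> by (intro concentrated) auto
    also have "U \<inter> F = B \<inter> F"
      by (auto simp: U_def)
    also have "emeasure \<nu> (B \<inter> F) = emeasure \<nu> B"
      using concentrated[OF B] by simp
    finally show "(INF U\<in>{U. open U \<and> B \<subseteq> U}. emeasure \<nu> U) \<le> emeasure \<nu> B" .
  qed
qed

lemma distr_in_finsupp_prob_measures_sphere:
  fixes g :: "'b \<Rightarrow> 'a::real_normed_vector"
  assumes "prob_space M" and g: "g \<in> measurable M borel" and "finite F" "F \<subseteq> sphere 0 1"
    and range_g: "\<And>y. y \<in> space M \<Longrightarrow> g y \<in> F"
  shows "distr M borel g \<in> finsupp_prob_measures_sphere"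
proof -
  have null: "emeasure (distr M borel g) A = 0" if "A \<in> sets borel" "A \<inter> F = {}" for A
  proof -
    have "g -` A \<inter> space M = {}"
      using range_g that(2) by blast
    then show ?thesis
      using emeasure_distr[OF g that(1)] by simp
  qed
  have "emeasure (distr M borel g) (- sphere 0 1) = 0"
    using \<open>F \<subseteq> sphere 0 1\<close> by (intro null) (auto intro: borel_comp borel_closed closed_sphere_metric)
  moreover have "emeasure (distr M borel g) (- F) = 0"
    using \<open>finite F\<close> by (intro null) (auto intro: borel_comp borel_closed finite_imp_closed)
  moreover have "prob_space (distr M borel g)"
    using \<open>prob_space M\<close> g by (rule prob_space.prob_space_distr)
  ultimately show ?thesis
    using assms regular_measure_finite_support[of "distr M borel g" F]
    unfolding finsupp_prob_measures_sphere_def prob_measures_sphere_def by auto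
qed

lemma integral_finite_support:
  fixes f :: "'a::t1_space \<Rightarrow> real"
  assumes "finite_measure M" and sets_M: "sets M = sets borel" and "finite F"
    and "emeasure M (- F) = 0" and f: "f \<in> borel_measurable borel"
  shows "integral\<^sup>L M f = (\<Sum>p\<in>F. measure M {p} * f p)"
proof -
  interpret finite_measure M by fact
  have "AE y in M. y \<in> F"
    using assms by (intro AE_in_closed finite_imp_closed)
  then have "AE y in M. f y = (\<Sum>p\<in>F. indicator {p} y * f p)"
    by eventually_elim (simp add: indicator_def \<open>finite F\<close>)
  then have "integral\<^sup>L M f = (\<integral>y. (\<Sum>p\<in>F. indicator {p} y * f p) \<partial>M)"
    using f by (intro integral_cong_AE) (auto simp: measurable_cong_sets[OF sets_M refl])
  also have "\<dots> = (\<Sum>p\<in>F. \<integral>y. indicator {p} y * f p \<partial>M)"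
  proof (rule Bochner_Integration.integral_sum)
    fix p assume "p \<in> F"
    have "integrable M (indicator {p} :: 'a \<Rightarrow> real)"
      using sets_M emeasure_finite[of "{p}"]
      by (intro integrable_real_indicator) (auto simp: less_top[symmetric] borel_closed)
    then show "integrable M (\<lambda>y. indicator {p} y * f p)"
      by simp
  qed
  also have "\<dots> = (\<Sum>p\<in>F. measure M {p} * f p)"
    using sets_M by (simp add: sets_eq_imp_space_eq[OF sets_M])
  finally show ?thesis .
qed

lemma prob_measures_sphereD:
  assumes "\<mu> \<in> prob_measures_sphere"
  shows "sets \<mu> = sets borel" "prob_space \<mu>" "regular_measure \<mu>" "emeasure \<mu> (- sphere 0 1) = 0"
  using assms by (auto simp: prob_measures_sphere_def)

context
  fixes \<mu> :: "'a::real_normed_vector measure"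
  assumes \<mu>: "\<mu> \<in> prob_measures_sphere"
begin

interpretation prob_space \<mu>
  using prob_measures_sphereD(2)[OF \<mu>] .

lemma space_prob_measures_sphere: "space \<mu> = UNIV"
  using sets_eq_imp_space_eq[OF prob_measures_sphereD(1)[OF \<mu>]] by simp

lemma sphere_nonempty: "sphere (0::'a) 1 \<noteq> {}"
  using prob_measures_sphereD(4)[OF \<mu>] emeasure_space_1 space_prob_measures_sphere by auto

lemma AE_in_sphere: "AE y in \<mu>. y \<in> sphere 0 1"
  using prob_measures_sphereD[OF \<mu>] by (intro AE_in_closed closed_sphere_metric)

lemma integrable_norm_diff: "integrable \<mu> (\<lambda>y. norm (x - y))"
proof (rule integrable_const_bound[where B="norm x + 1"])
  show "AE y in \<mu>. norm (norm (x - y)) \<le> norm x + 1"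
    using AE_in_sphere
  proof eventually_elim
    fix y :: 'a assume "y \<in> sphere 0 1"
    then show "norm (norm (x - y)) \<le> norm x + 1"
      using norm_triangle_ineq4[of x y] by simp
  qed
  show "(\<lambda>y. norm (x - y)) \<in> borel_measurable \<mu>"
    unfolding measurable_cong_sets[OF prob_measures_sphereD(1)[OF \<mu>] refl]
    by (rule borel_measurable_norm_diff)
qed

lemma potential_le_2:
  assumes "x \<in> sphere 0 1"
  shows "potential \<mu> x \<le> 2"
proof -
  have "AE y in \<mu>. norm (x - y) \<le> 2"
    using AE_in_sphere by eventually_elim (rule norm_diff_le_2_sphere[OF assms])
  then have "potential \<mu> x \<le> (\<integral>y. 2 \<partial>\<mu>)"
    unfolding potential_def by (intro integral_mono_AE integrable_norm_diff) simp_all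
  then show ?thesis by (simp add: prob_space)
qed

lemma bdd_potential_sphere:
  "bdd_above (potential \<mu> ` sphere 0 1)" "bdd_below (potential \<mu> ` sphere 0 1)"
  using potential_le_2 potential_nonneg by (auto intro!: bdd_aboveI[of _ 2] bdd_belowI[of _ 0])

lemma A_set_eq_interval: "A_set \<mu> = {pot_inf \<mu>..pot_sup \<mu>}"
  unfolding A_set_def pot_inf_def pot_sup_def
  using sphere_nonempty bdd_potential_sphere by (intro closure_convex_hull_real) auto

lemma pot_inf_le_potential: "x \<in> sphere 0 1 \<Longrightarrow> pot_inf \<mu> \<le> potential \<mu> x"
  unfolding pot_inf_def by (rule cINF_lower[OF bdd_potential_sphere(2)])

lemma potential_le_pot_sup: "x \<in> sphere 0 1 \<Longrightarrow> potential \<mu> x \<le> pot_sup \<mu>"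
  unfolding pot_sup_def by (rule cSUP_upper[OF _ bdd_potential_sphere(1)])

lemma pot_inf_le_2: "pot_inf \<mu> \<le> 2"
  using sphere_nonempty pot_inf_le_potential potential_le_2 by force

lemma pot_inf_le_pot_inf_add:
  assumes "\<And>x. x \<in> sphere 0 1 \<Longrightarrow> \<bar>potential \<mu> x - potential \<nu> x\<bar> \<le> e"
  shows "pot_inf \<mu> \<le> pot_inf \<nu> + e"
  unfolding pot_inf_def using sphere_nonempty bdd_potential_sphere(2)
  by (rule cINF_le_cINF_add) (use assms in \<open>force simp: abs_diff_le_iff\<close>)

lemma pot_sup_le_pot_sup_add:
  assumes "\<And>x. x \<in> sphere 0 1 \<Longrightarrow> \<bar>potential \<mu> x - potential \<nu> x\<bar> \<le> e"
  shows "pot_sup \<nu> \<le> pot_sup \<mu> + e"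
  unfolding pot_sup_def using sphere_nonempty bdd_potential_sphere(1)
  by (rule cSUP_le_cSUP_add) (use assms in \<open>force simp: abs_diff_le_iff\<close>)

lemma compact_subset_sphere_large_measure:
  assumes "0 < d"
  obtains K where "compact K" "K \<subseteq> sphere 0 1" "measure \<mu> (- K) < d"
proof -
  have sphere_events: "sphere 0 1 \<in> sets \<mu>"
    using prob_measures_sphereD(1)[OF \<mu>] by (simp add: borel_closed closed_sphere_metric)
  have "measure \<mu> (- sphere 0 1) = 0"
    using prob_measures_sphereD(4)[OF \<mu>] by (simp add: measure_def)
  then have "measure \<mu> (sphere 0 1) = 1"
    using prob_compl[OF sphere_events] space_prob_measures_sphere by (simp add: Compl_eq_Diff_UNIV)
  then have "ennreal (1 - d) < emeasure \<mu> (sphere 0 1)"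
    using assms by (simp add: emeasure_eq_measure ennreal_lessI)
  also have "\<dots> = (SUP K\<in>{K. compact K \<and> K \<subseteq> sphere 0 1}. emeasure \<mu> K)"
    using prob_measures_sphereD(3)[OF \<mu>] borel_closed[OF closed_sphere_metric]
    unfolding regular_measure_def by blast
  finally obtain K where K: "compact K" "K \<subseteq> sphere 0 1" and K_large: "ennreal (1 - d) < emeasure \<mu> K"
    by (auto simp: less_SUP_iff)
  have "1 - d < measure \<mu> K"
  proof (cases "0 \<le> 1 - d")
    case True
    then show ?thesis
      using K_large by (simp add: emeasure_eq_measure ennreal_less_iff)
  next
    case False
    then show ?thesis
      using measure_nonneg[of \<mu> K] by linarith
  qed
  moreover have "measure \<mu> (- K) = 1 - measure \<mu> K"
    using prob_compl[of K] K(1) prob_measures_sphereD(1)[OF \<mu>] space_prob_measures_sphere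
    by (simp add: Compl_eq_Diff_UNIV borel_closed compact_imp_closed)
  ultimately show ?thesis
    using that K by simp
qed

end

lemma compact_borel_quantizer:
  fixes K :: "'a::metric_space set"
  assumes "compact K" "0 < d"
  obtains g :: "'a \<Rightarrow> 'a" where "g \<in> borel_measurable borel" "finite (range g)"
    "range g \<subseteq> insert s K" "\<And>y. y \<in> K \<Longrightarrow> dist y (g y) < d"
proof -
  obtain T where T: "T \<subseteq> K" "finite T" "K \<subseteq> (\<Union>c\<in>T. ball c d)"
  proof (rule compactE_image[OF assms(1), of K "\<lambda>c. ball c d"])
    show "K \<subseteq> (\<Union>c\<in>K. ball c d)"
      using assms(2) by auto
  qed auto
  obtain n and c :: "nat \<Rightarrow> 'a" where c: "T = c ` {..<n}"
    using T(2) unfolding finite_conv_nat_seg_image lessThan_def by blast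
  \<comment> \<open>the alternative i = n makes the LEAST well defined; it is n exactly off all the balls\<close>
  define j where "j y = (LEAST i. i = n \<or> y \<in> ball (c i) d)" for y
  define q where "q i = (if i < n then c i else s)" for i
  have [measurable]: "Measurable.pred borel (\<lambda>y. y \<in> ball (c i) d)" for i
    using pred_sets2[OF borel_open[OF open_ball] measurable_ident_sets[OF refl]] .
  have j_meas: "j \<in> measurable borel (count_space UNIV)"
    unfolding j_def by measurable
  show ?thesis
  proof
    show "q \<circ> j \<in> borel_measurable borel"
      using j_meas by (rule measurable_comp) simp
    have range: "range (q \<circ> j) \<subseteq> insert s T"
      using c by (auto simp: q_def)
    then show "finite (range (q \<circ> j))"
      using T(2) finite_subset[OF range] by simp
    show "range (q \<circ> j) \<subseteq> insert s K"
      using range T(1) by blast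
    fix y assume "y \<in> K"
    then obtain i where i: "i < n" "y \<in> ball (c i) d"
      using T(3) c by auto
    have "j y \<le> i"
      unfolding j_def using i(2) by (intro Least_le) simp
    then have "j y < n"
      using i(1) by simp
    moreover have "j y = n \<or> y \<in> ball (c (j y)) d"
      unfolding j_def by (rule LeastI[of _ n]) simp
    ultimately show "dist y ((q \<circ> j) y) < d"
      by (simp add: q_def dist_commute)
  qed
qed

lemma potential_distr_diff_le:
  fixes \<mu> :: "'a::real_normed_vector measure"
  assumes \<mu>: "\<mu> \<in> prob_measures_sphere" and g: "g \<in> measurable \<mu> borel"
    and \<nu>: "distr \<mu> borel g \<in> prob_measures_sphere"
    and h: "integrable \<mu> h" "AE y in \<mu>. norm (y - g y) \<le> h y"
  shows "\<bar>potential \<mu> x - potential (distr \<mu> borel g) x\<bar> \<le> (\<integral>y. h y \<partial>\<mu>)"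
proof -
  have int_g: "integrable \<mu> (\<lambda>y. norm (x - g y))"
    using integrable_norm_diff[OF \<nu>, of x] integrable_distr_eq[OF g borel_measurable_norm_diff] by simp
  have pot_distr: "potential (distr \<mu> borel g) x = (\<integral>y. norm (x - g y) \<partial>\<mu>)"
    unfolding potential_def by (rule integral_distr[OF g borel_measurable_norm_diff])
  have "\<bar>potential \<mu> x - potential (distr \<mu> borel g) x\<bar> = \<bar>\<integral>y. norm (x - y) - norm (x - g y) \<partial>\<mu>\<bar>"
    unfolding pot_distr unfolding potential_def using integrable_norm_diff[OF \<mu>] int_g by simp
  also have "\<dots> \<le> (\<integral>y. \<bar>norm (x - y) - norm (x - g y)\<bar> \<partial>\<mu>)"
    by (rule integral_abs_bound)
  also have "\<dots> \<le> (\<integral>y. h y \<partial>\<mu>)"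
    using h(1)
  proof (rule integral_mono_AE')
    show "AE y in \<mu>. \<bar>norm (x - y) - norm (x - g y)\<bar> \<le> h y"
      using h(2)
    proof eventually_elim
      fix y assume "norm (y - g y) \<le> h y"
      moreover have "\<bar>norm (x - y) - norm (x - g y)\<bar> \<le> norm (y - g y)"
        using norm_triangle_ineq3[of "x - y" "x - g y"] by (simp add: norm_minus_commute)
      ultimately show "\<bar>norm (x - y) - norm (x - g y)\<bar> \<le> h y"
        by linarith
    qed
    show "AE y in \<mu>. 0 \<le> h y"
      using h(2) by eventually_elim (rule order_trans[OF norm_ge_zero])
  qed
  finally show ?thesis .
qed

lemma potential_distr_diff_le_measure:
  fixes \<mu> :: "'a::real_normed_vector measure"
  assumes \<mu>: "\<mu> \<in> prob_measures_sphere" and g: "g \<in> measurable \<mu> borel"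
    and \<nu>: "distr \<mu> borel g \<in> prob_measures_sphere"
    and "compact K" and g_sphere: "\<And>y. g y \<in> sphere 0 1"
    and g_near: "\<And>y. y \<in> K \<Longrightarrow> dist y (g y) < d" and "0 < d"
  shows "\<bar>potential \<mu> x - potential (distr \<mu> borel g) x\<bar> \<le> d + 2 * measure \<mu> (- K)"
proof -
  interpret prob_space \<mu>
    using prob_measures_sphereD(2)[OF \<mu>] .
  have "- K \<in> sets \<mu>"
    using prob_measures_sphereD(1)[OF \<mu>] \<open>compact K\<close> by (simp add: borel_closed compact_imp_closed)
  then have int_K: "integrable \<mu> (indicator (- K) :: 'a \<Rightarrow> real)"
    using emeasure_finite[of "- K"] by (intro integrable_real_indicator) (auto simp: less_top[symmetric])
  then have int_bound: "integrable \<mu> (\<lambda>y. d + 2 * indicator (- K) y)"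
    by simp
  have "AE y in \<mu>. norm (y - g y) \<le> d + 2 * indicator (- K) y"
    using AE_in_sphere[OF \<mu>]
  proof eventually_elim
    fix y :: 'a assume y: "y \<in> sphere 0 1"
    show "norm (y - g y) \<le> d + 2 * indicator (- K) y"
    proof (cases "y \<in> K")
      case True
      then show ?thesis using g_near[of y] by (simp add: dist_norm)
    next
      case False
      then show ?thesis
        using \<open>0 < d\<close> norm_diff_le_2_sphere[OF y g_sphere[of y]] by simp
    qed
  qed
  with potential_distr_diff_le[OF \<mu> g \<nu> int_bound]
  have "\<bar>potential \<mu> x - potential (distr \<mu> borel g) x\<bar> \<le> (\<integral>y. d + 2 * indicator (- K) y \<partial>\<mu>)" .
  also have "\<dots> = d + 2 * measure \<mu> (- K)"
    using int_K prob_space by (simp add: space_prob_measures_sphere[OF \<mu>])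
  finally show ?thesis .
qed

lemma finsupp_approx_potential:
  assumes \<mu>: "\<mu> \<in> prob_measures_sphere" and "0 < e"
  obtains \<nu> where "\<nu> \<in> finsupp_prob_measures_sphere" "\<And>x. \<bar>potential \<mu> x - potential \<nu> x\<bar> \<le> e"
proof -
  define d where "d = e / 3"
  have "0 < d" using \<open>0 < e\<close> by (simp add: d_def)
  obtain s :: 'a where s: "s \<in> sphere 0 1"
    using sphere_nonempty[OF \<mu>] by blast
  obtain K where K: "compact K" "K \<subseteq> sphere 0 1" "measure \<mu> (- K) < d"
    using compact_subset_sphere_large_measure[OF \<mu> \<open>0 < d\<close>] by blast
  obtain g where g: "g \<in> borel_measurable borel" "finite (range g)" "range g \<subseteq> insert s K"
    and g_near: "\<And>y. y \<in> K \<Longrightarrow> dist y (g y) < d"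
    using compact_borel_quantizer[OF K(1) \<open>0 < d\<close>, of s] by blast
  have g_meas: "g \<in> measurable \<mu> borel"
    unfolding measurable_cong_sets[OF prob_measures_sphereD(1)[OF \<mu>] refl] by (rule g(1))
  have g_sphere: "g y \<in> sphere 0 1" for y
  proof -
    have "g y \<in> insert s K"
      using g(3) by blast
    then show ?thesis
      using K(2) s by blast
  qed
  define \<nu> where "\<nu> = distr \<mu> borel g"
  have \<nu>: "\<nu> \<in> finsupp_prob_measures_sphere"
    unfolding \<nu>_def using prob_measures_sphereD(2)[OF \<mu>] g_meas g(2,3) K(2) s
    by (intro distr_in_finsupp_prob_measures_sphere[where F="range g"]) auto
  then have \<nu>_prob: "distr \<mu> borel g \<in> prob_measures_sphere"
    by (simp add: \<nu>_def finsupp_prob_measures_sphere_def)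
  have "\<bar>potential \<mu> x - potential \<nu> x\<bar> \<le> e" for x
    using potential_distr_diff_le_measure[OF \<mu> g_meas \<nu>_prob K(1) g_sphere g_near \<open>0 < d\<close>, of x] K(3)
    unfolding \<nu>_def d_def by linarith
  with \<nu> that show ?thesis
    by blast
qed

lemma finsupp_potential_eq_sum:
  assumes "\<nu> \<in> finsupp_prob_measures_sphere"
  obtains F where "finite F" "F \<subseteq> sphere 0 1" "(\<Sum>p\<in>F. measure \<nu> {p}) = 1"
    "\<And>x. potential \<nu> x = (\<Sum>p\<in>F. measure \<nu> {p} * norm (x - p))"
proof -
  obtain F where F: "finite F" "F \<subseteq> sphere 0 1" "emeasure \<nu> (- F) = 0"
    and \<nu>: "\<nu> \<in> prob_measures_sphere"
    using assms by (auto simp: finsupp_prob_measures_sphere_def)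
  interpret prob_space \<nu>
    using prob_measures_sphereD(2)[OF \<nu>] .
  note sum_F = integral_finite_support[OF finite_measure_axioms prob_measures_sphereD(1)[OF \<nu>] F(1,3)]
  have "(\<Sum>p\<in>F. measure \<nu> {p}) = 1"
    using sum_F[of "\<lambda>_. 1"] by (simp add: prob_space)
  moreover have "potential \<nu> x = (\<Sum>p\<in>F. measure \<nu> {p} * norm (x - p))" for x
    unfolding potential_def by (rule sum_F) (rule borel_measurable_norm_diff)
  ultimately show ?thesis
    using that F(1,2) by blast
qed

lemma finsupp_pot_inf_le_pot_sup:
  fixes \<nu>\<^sub>1 \<nu>\<^sub>2 :: "'a::real_normed_vector measure"
  assumes \<nu>\<^sub>1: "\<nu>\<^sub>1 \<in> finsupp_prob_measures_sphere" and \<nu>\<^sub>2: "\<nu>\<^sub>2 \<in> finsupp_prob_measures_sphere"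
  shows "pot_inf \<nu>\<^sub>1 \<le> pot_sup \<nu>\<^sub>2"
proof -
  have M1: "\<nu>\<^sub>1 \<in> prob_measures_sphere" "\<nu>\<^sub>2 \<in> prob_measures_sphere"
    using assms by (auto simp: finsupp_prob_measures_sphere_def)
  obtain F\<^sub>1 where F\<^sub>1: "finite F\<^sub>1" "F\<^sub>1 \<subseteq> sphere 0 1" "(\<Sum>p\<in>F\<^sub>1. measure \<nu>\<^sub>1 {p}) = 1"
    "\<And>x. potential \<nu>\<^sub>1 x = (\<Sum>p\<in>F\<^sub>1. measure \<nu>\<^sub>1 {p} * norm (x - p))"
    using finsupp_potential_eq_sum[OF \<nu>\<^sub>1] by blast
  obtain F\<^sub>2 where F\<^sub>2: "finite F\<^sub>2" "F\<^sub>2 \<subseteq> sphere 0 1" "(\<Sum>q\<in>F\<^sub>2. measure \<nu>\<^sub>2 {q}) = 1"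
    "\<And>x. potential \<nu>\<^sub>2 x = (\<Sum>q\<in>F\<^sub>2. measure \<nu>\<^sub>2 {q} * norm (x - q))"
    using finsupp_potential_eq_sum[OF \<nu>\<^sub>2] by blast
  have "pot_inf \<nu>\<^sub>1 = (\<Sum>q\<in>F\<^sub>2. measure \<nu>\<^sub>2 {q} * pot_inf \<nu>\<^sub>1)"
    using F\<^sub>2(3) by (simp add: sum_distrib_right[symmetric])
  also have "\<dots> \<le> (\<Sum>q\<in>F\<^sub>2. measure \<nu>\<^sub>2 {q} * potential \<nu>\<^sub>1 q)"
    using F\<^sub>2(2) pot_inf_le_potential[OF M1(1)] by (intro sum_mono mult_left_mono) auto
  also have "\<dots> = (\<Sum>p\<in>F\<^sub>1. measure \<nu>\<^sub>1 {p} * potential \<nu>\<^sub>2 p)"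
    \<comment> \<open>symmetry of the kernel\<close>
    unfolding F\<^sub>1(4) F\<^sub>2(4) sum_distrib_left
    by (subst sum.swap) (simp add: norm_minus_commute mult_ac)
  also have "\<dots> \<le> (\<Sum>p\<in>F\<^sub>1. measure \<nu>\<^sub>1 {p} * pot_sup \<nu>\<^sub>2)"
    using F\<^sub>1(2) potential_le_pot_sup[OF M1(2)] by (intro sum_mono mult_left_mono) auto
  also have "\<dots> = pot_sup \<nu>\<^sub>2"
    using F\<^sub>1(3) by (simp add: sum_distrib_right[symmetric])
  finally show ?thesis .
qed

lemma pot_inf_le_pot_sup:
  fixes \<mu>\<^sub>1 \<mu>\<^sub>2 :: "'a::real_normed_vector measure"
  assumes \<mu>\<^sub>1: "\<mu>\<^sub>1 \<in> prob_measures_sphere" and \<mu>\<^sub>2: "\<mu>\<^sub>2 \<in> prob_measures_sphere"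
  shows "pot_inf \<mu>\<^sub>1 \<le> pot_sup \<mu>\<^sub>2"
proof (rule field_le_epsilon)
  fix e :: real assume "0 < e"
  then have "0 < e / 2" by simp
  obtain \<nu>\<^sub>1 where \<nu>\<^sub>1: "\<nu>\<^sub>1 \<in> finsupp_prob_measures_sphere"
    "\<And>x. \<bar>potential \<mu>\<^sub>1 x - potential \<nu>\<^sub>1 x\<bar> \<le> e / 2"
    using finsupp_approx_potential[OF \<mu>\<^sub>1 \<open>0 < e / 2\<close>] by blast
  obtain \<nu>\<^sub>2 where \<nu>\<^sub>2: "\<nu>\<^sub>2 \<in> finsupp_prob_measures_sphere"
    "\<And>x. \<bar>potential \<mu>\<^sub>2 x - potential \<nu>\<^sub>2 x\<bar> \<le> e / 2"
    using finsupp_approx_potential[OF \<mu>\<^sub>2 \<open>0 < e / 2\<close>] by blast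
  have "pot_inf \<mu>\<^sub>1 \<le> pot_inf \<nu>\<^sub>1 + e / 2"
    using \<nu>\<^sub>1(2) by (rule pot_inf_le_pot_inf_add[OF \<mu>\<^sub>1])
  moreover have "pot_inf \<nu>\<^sub>1 \<le> pot_sup \<nu>\<^sub>2"
    using \<nu>\<^sub>1(1) \<nu>\<^sub>2(1) by (rule finsupp_pot_inf_le_pot_sup)
  moreover have "pot_sup \<nu>\<^sub>2 \<le> pot_sup \<mu>\<^sub>2 + e / 2"
    using \<nu>\<^sub>2(2) by (rule pot_sup_le_pot_sup_add[OF \<mu>\<^sub>2])
  ultimately show "pot_inf \<mu>\<^sub>1 \<le> pot_sup \<mu>\<^sub>2 + e"
    by linarith
qed

lemma calR_subset_A_set:
  fixes \<mu> :: "'a::real_normed_vector measure"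
  assumes \<mu>: "\<mu> \<in> prob_measures_sphere"
  shows "calR TYPE('a) \<subseteq> A_set \<mu>"
proof
  fix t assume t: "t \<in> calR TYPE('a)"
  have close: "pot_inf \<mu> \<le> t + e \<and> t \<le> pot_sup \<mu> + e" if "0 < e" for e
  proof -
    obtain \<nu> where \<nu>: "\<nu> \<in> finsupp_prob_measures_sphere"
      "\<And>x. \<bar>potential \<mu> x - potential \<nu> x\<bar> \<le> e"
      using finsupp_approx_potential[OF \<mu> \<open>0 < e\<close>] by blast
    have "\<nu> \<in> prob_measures_sphere"
      using \<nu>(1) by (simp add: finsupp_prob_measures_sphere_def)
    moreover have "t \<in> A_set \<nu>"
      using t \<nu>(1) unfolding calR_def by blast
    ultimately have "pot_inf \<nu> \<le> t" "t \<le> pot_sup \<nu>"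
      by (simp_all add: A_set_eq_interval)
    moreover have "pot_inf \<mu> \<le> pot_inf \<nu> + e"
      using \<nu>(2) by (rule pot_inf_le_pot_inf_add[OF \<mu>])
    moreover have "pot_sup \<nu> \<le> pot_sup \<mu> + e"
      using \<nu>(2) by (rule pot_sup_le_pot_sup_add[OF \<mu>])
    ultimately show ?thesis
      by linarith
  qed
  have "pot_inf \<mu> \<le> t"
    by (rule field_le_epsilon) (use close in blast)
  moreover have "t \<le> pot_sup \<mu>"
    by (rule field_le_epsilon) (use close in blast)
  ultimately show "t \<in> A_set \<mu>"
    unfolding A_set_eq_interval[OF \<mu>] by simp
qed

lemma SUP_pot_inf_in_calA:
  "(SUP \<mu>\<in>(prob_measures_sphere :: 'a::real_normed_vector measure set). pot_inf \<mu>) \<in> calA TYPE('a)"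
  (is "?c \<in> _")
  unfolding calA_def
proof
  fix \<mu> :: "'a measure" assume \<mu>: "\<mu> \<in> prob_measures_sphere"
  have "pot_inf \<mu> \<le> ?c"
    using \<mu> pot_inf_le_2 by (intro cSUP_upper bdd_aboveI[of _ 2]) auto
  moreover have "?c \<le> pot_sup \<mu>"
    using \<mu> pot_inf_le_pot_sup by (intro cSUP_least) auto
  ultimately show "?c \<in> A_set \<mu>"
    using A_set_eq_interval[OF \<mu>] by simp
qed

theorem theorem3p1:
  shows "calA TYPE('a::real_normed_vector) = calR TYPE('a) \<and> calA TYPE('a) \<noteq> {}"
proof -
  have "calA TYPE('a) \<subseteq> calR TYPE('a)"
    unfolding calA_def calR_def finsupp_prob_measures_sphere_def by blast
  moreover have "calR TYPE('a) \<subseteq> calA TYPE('a)"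
    unfolding calA_def using calR_subset_A_set by blast
  ultimately show ?thesis
    using SUP_pot_inf_in_calA by blast
qed

end
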